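(* Assume $\sigma_1(x)=\tfrac12\sigma_1''(0)\,x(x-a_1)$ and $\sigma_2(x)=\tfrac12\sigma_2''(0)\,x(x-a_2)$ with $\sigma_1''(0)\ne0$, $\sigma_2''(0)\ne0$ and real $0<a_1<a_2$. Let $\Lambda_q=q^{-2}\Big[1+\frac{(1-q^{-1})\tau'(0)}{\frac12\sigma_1''(0)}\Big]$ and $y_0=q^{-1}\Big[1-\frac{(1-q^{-1})}{a_1}\frac{\tau(0)}{\frac12\sigma_1''(0)}\Big]$, and assume $0<qy_0<1$ and $0<q^2\Lambda_q<1$. Put $b=a_1$ and $$\rho(x)=|x|^{\alpha}\frac{(qx/b;q)_\infty}{(x/a_2;q)_\infty},\qquad q^{\alpha}=\frac{q^{-2}\sigma_2''(0)a_2}{\sigma_1''(0)b}.$$ Then there exist polynomials $P_n$, $n\in\mathbb{N}_0$, with $P_n$ of degree $n$ a solution of the q-EHT with $\lambda=\lambda_n$, and nonzero constants $d_n^2$, such that for all $m,n\in\mathbb{N}_0$ $$\int_0^{b}P_n(x)P_m(x)\rho(x)\,d_qx=d_n^2\delta_{mn},$$ i.e. orthogonality with respect to $\rho$ supported on $\{q^kb\}_{k\in\mathbb{N}_0}$.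
   Context: Throughout $0<q<1$. For a function $y$ and $\zeta\in\{q,q^{-1}\}$, $D_\zeta y(x)=\frac{y(x)-y(\zeta x)}{(1-\zeta)x}$ for $x\ne0$ and $D_\zeta y(0)=y'(0)$; $[n]_q=\frac{1-q^n}{1-q}$. Let $\sigma_1$ be a real polynomial of degree at most two, $\tau(x)=\tau'(0)x+\tau(0)$ a real polynomial with $\tau'(0)\ne0$, and $\sigma_2(x):=q[\sigma_1(x)+(1-q^{-1})x\tau(x)]$. The q-EHT with parameter $n$ is $\sigma_1(x)D_{q^{-1}}D_qy(x)+\tau(x)D_qy(x)+\lambda_ny(x)=0$, $\lambda_n=-[n]_q\big(\tau'(0)+\tfrac12[n-1]_{q^{-1}}\sigma_1''(0)\big)$. $(\beta;q)_\infty=\prod_{k\ge0}(1-\beta q^k)$. For $q^\alpha=c$ ($c\ne0$), $\alpha$ is any complex number with $e^{\alpha\ln q}=c$ and $|x|^\alpha:=e^{\alpha\ln|x|}$. For $b>0$, $\int_0^b f(x)\,d_qx=(1-q)b\sum_{j\ge0}q^jf(q^jb)$. *)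

theory Defs
  imports "HOL-Analysis.Analysis" "HOL-Computational_Algebra.Polynomial"
begin

definition qD :: "real \<Rightarrow> (real \<Rightarrow> real) \<Rightarrow> real \<Rightarrow> real" where
  "qD \<zeta> y x = (if x = 0 then deriv y 0 else (y x - y (\<zeta> * x)) / ((1 - \<zeta>) * x))"

definition qnum :: "real \<Rightarrow> int \<Rightarrow> real" where
  "qnum q k = (1 - q powi k) / (1 - q)"

definition qpoch_inf :: "real \<Rightarrow> real \<Rightarrow> real" where
  "qpoch_inf \<beta> q = (\<Prod>k. (1 - \<beta> * q ^ k))"

definition qint_has :: "real \<Rightarrow> real \<Rightarrow> (real \<Rightarrow> complex) \<Rightarrow> complex \<Rightarrow> bool" where
  "qint_has q b f I \<longleftrightarrow>
     (\<lambda>j. complex_of_real ((1 - q) * b * q ^ j) * f (q ^ j * b)) sums I"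

end

theory Submission
  imports Defs
begin

text \<open>
  On polynomials the operator sigma1(x) D_{1/q} D_q + tau(x) D_q is bidiagonal in the monomial
  basis, with diagonal entries -lambda_n. The hypothesis q^2 Lambda_q < 1 makes these pairwise
  distinct, so back-substitution gives an eigenpolynomial P_n of every degree n.

  On the grid x_j = q^j b the q-EHT becomes a three-term recurrence. The weight satisfies the
  Pearson equation that makes this recurrence symmetric, and sigma1(b) = 0 removes the boundary
  at j = 0. A discrete Green identity then expresses (lambda_m - lambda_n) times a partial sum of
  the q-integral of P_n P_m rho as a boundary term at x_N. That term is rho(x_N) times a
  polynomial, and the ratio q y0 in (0, 1) makes rho decay geometrically along the grid, so the
  boundary term tends to 0. The norms are positive because a nonzero polynomial cannot vanish
  on the infinite grid.
\<close>

lemma qpoch_inf_convergent: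
  fixes q \<beta> :: real
  assumes "0 < q" "q < 1"
  shows "convergent_prod (\<lambda>k. 1 - \<beta> * q ^ k)"
proof (rule abs_convergent_prod_imp_convergent_prod, rule summable_imp_abs_convergent_prod)
  have "summable (\<lambda>k. \<bar>\<beta>\<bar> * q ^ k)"
    using assms by (intro summable_mult summable_geometric) auto
  then show "summable (\<lambda>k. norm (1 - \<beta> * q ^ k - 1))"
    using assms by (simp add: abs_mult power_abs)
qed

lemma qpoch_inf_pos:
  fixes q \<beta> :: real
  assumes q: "0 < q" "q < 1" and \<beta>: "\<beta> < 1"
  shows "0 < qpoch_inf \<beta> q"
  unfolding qpoch_inf_def
proof (rule less_0_prodinf[OF qpoch_inf_convergent[OF q]])
  fix k
  have "\<beta> * q ^ k < 1"
  proof (cases "\<beta> \<le> 0")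
    case True
    then show ?thesis using q by (smt (verit) mult_nonpos_nonneg zero_le_power)
  next
    case False
    then have "\<beta> * q ^ k \<le> \<beta>" using q by (simp add: mult_left_le power_le_one)
    then show ?thesis using \<beta> by linarith
  qed
  then show "0 < 1 - \<beta> * q ^ k" by simp
qed

lemma qpoch_inf_antimono:
  fixes q \<beta> \<beta>' :: real
  assumes q: "0 < q" "q < 1" and \<beta>: "0 \<le> \<beta>" "\<beta> \<le> \<beta>'" "\<beta>' < 1"
  shows "qpoch_inf \<beta>' q \<le> qpoch_inf \<beta> q"
  unfolding qpoch_inf_def
proof (rule prodinf_le[OF convergent_prod_has_prod convergent_prod_has_prod])
  show "convergent_prod (\<lambda>k. 1 - \<beta> * q ^ k)" "convergent_prod (\<lambda>k. 1 - \<beta>' * q ^ k)"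
    using qpoch_inf_convergent[OF q] by blast+
  fix k
  have "q ^ k \<le> 1" using q by (simp add: power_le_one)
  then have "\<beta>' * q ^ k \<le> \<beta>'" "\<beta> * q ^ k \<le> \<beta>' * q ^ k"
    using q \<beta> by (auto simp: mult_left_le intro: mult_right_mono)
  then show "0 \<le> 1 - \<beta>' * q ^ k \<and> 1 - \<beta>' * q ^ k \<le> 1 - \<beta> * q ^ k"
    using \<beta> by linarith
qed

lemma qpoch_inf_le_1:
  fixes q \<beta> :: real
  assumes "0 < q" "q < 1" "0 \<le> \<beta>" "\<beta> < 1"
  shows "qpoch_inf \<beta> q \<le> 1"
  using qpoch_inf_antimono[of q 0 \<beta>] assms by (simp add: qpoch_inf_def)

lemma qpoch_inf_shift:
  fixes q \<beta> :: real
  assumes q: "0 < q" "q < 1" and "\<beta> \<noteq> 1"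
  shows "qpoch_inf \<beta> q = (1 - \<beta>) * qpoch_inf (\<beta> * q) q"
proof -
  have "(\<Prod>k. 1 - \<beta> * q ^ Suc k) = qpoch_inf \<beta> q / (1 - \<beta> * q ^ 0)"
    unfolding qpoch_inf_def
    by (rule prodinf_split_head[OF qpoch_inf_convergent[OF q]]) (use assms in auto)
  moreover have "(\<lambda>k. 1 - \<beta> * q ^ Suc k) = (\<lambda>k. 1 - \<beta> * q * q ^ k)"
    by (simp add: mult.assoc)
  ultimately show ?thesis
    using assms unfolding qpoch_inf_def by (simp add: field_simps)
qed

definition qnat :: "real \<Rightarrow> nat \<Rightarrow> real" where
  "qnat z k = (1 - z ^ k) / (1 - z)"

lemma qnum_of_nat: "qnum z (int k) = qnat z k"
  by (simp add: qnum_def qnat_def)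

lemma qnat_0 [simp]: "qnat z 0 = 0"
  by (simp add: qnat_def)

lemma qnat_Suc: "z \<noteq> 1 \<Longrightarrow> qnat z (Suc k) = 1 + z * qnat z k"
  unfolding qnat_def by (simp add: field_simps)

definition qdiff_poly :: "real \<Rightarrow> real poly \<Rightarrow> real poly" where
  "qdiff_poly z p = Abs_poly (\<lambda>i. qnat z (Suc i) * coeff p (Suc i))"

lemma coeff_qdiff_poly: "coeff (qdiff_poly z p) i = qnat z (Suc i) * coeff p (Suc i)"
proof -
  have "coeff (qdiff_poly z p) = (\<lambda>i. qnat z (Suc i) * coeff p (Suc i))"
    unfolding qdiff_poly_def by (rule coeff_Abs_poly[where n = "degree p"]) (simp add: coeff_eq_0)
  then show ?thesis by simp
qed

lemma qdiff_poly_pCons: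
  "z \<noteq> 1 \<Longrightarrow> qdiff_poly z (pCons a p) = p + smult z (pCons 0 (qdiff_poly z p))"
  by (rule poly_eqI) (auto simp: coeff_qdiff_poly coeff_pCons qnat_Suc algebra_simps split: nat.split)

lemma poly_qdiff_poly:
  assumes "z \<noteq> 1"
  shows "(1 - z) * x * poly (qdiff_poly z p) x = poly p x - poly p (z * x)"
proof (induction p)
  case 0
  then show ?case by (simp add: coeff_qdiff_poly poly_eqI[of "qdiff_poly z 0" 0])
next
  case (pCons a p)
  then have "x * z * ((1 - z) * x * poly (qdiff_poly z p) x) = x * z * (poly p x - poly p (z * x))"
    by simp
  then show ?case using assms by (simp add: qdiff_poly_pCons algebra_simps)
qed

lemma qD_poly:
  assumes "z \<noteq> 1"
  shows "qD z (poly p) = poly (qdiff_poly z p)"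
proof
  fix x
  show "qD z (poly p) x = poly (qdiff_poly z p) x"
  proof (cases "x = 0")
    case True
    have "deriv (poly p) 0 = poly (pderiv p) 0"
      by (rule DERIV_imp_deriv) (rule poly_DERIV)
    then show ?thesis
      using True assms by (simp add: qD_def poly_0_coeff_0 coeff_pderiv coeff_qdiff_poly qnat_def)
  next
    case False
    then show ?thesis
      using poly_qdiff_poly[OF assms, of x p] assms by (simp add: qD_def field_simps)
  qed
qed

definition qeht_op :: "real \<Rightarrow> real poly \<Rightarrow> real poly \<Rightarrow> real poly \<Rightarrow> real poly" where
  "qeht_op q \<sigma> \<tau> p = \<sigma> * qdiff_poly (1 / q) (qdiff_poly q p) + \<tau> * qdiff_poly q p"

lemma poly_qeht_op:
  assumes "q \<noteq> 1"
  shows "poly (qeht_op q \<sigma> \<tau> p) x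
           = poly \<sigma> x * qD (1 / q) (qD q (poly p)) x + poly \<tau> x * qD q (poly p) x"
proof -
  have "1 / q \<noteq> 1" using assms by simp
  then show ?thesis
    using assms by (simp add: qeht_op_def qD_poly)
qed

definition qeht_eigenvalue :: "real \<Rightarrow> real \<Rightarrow> real \<Rightarrow> nat \<Rightarrow> real" where
  "qeht_eigenvalue q d t1 n = qnat q n * (t1 + d * qnat (1 / q) (n - 1))"

lemma qnum_eq_qeht_eigenvalue:
  "qnum q (int n) * (t1 + 1 / 2 * qnum (1 / q) (int n - 1) * s1) = qeht_eigenvalue q (s1 / 2) t1 n"
proof (cases n)
  case (Suc k)
  then have "int n - 1 = int k" by simp
  then show ?thesis
    unfolding qnum_of_nat qeht_eigenvalue_def using Suc by (simp add: qnum_of_nat mult_ac)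
qed (simp add: qnum_def qeht_eigenvalue_def)

lemma coeff_qeht_op:
  "coeff (qeht_op q [:0, e, d:] [:t0, t1:] p) n
     = qeht_eigenvalue q d t1 n * coeff p n + (e * qnat (1 / q) n + t0) * qnat q (Suc n) * coeff p (Suc n)"
  by (cases n; cases "n - 1")
     (auto simp: qeht_op_def qeht_eigenvalue_def coeff_qdiff_poly coeff_pCons algebra_simps split: nat.split)

lemma bidiagonal_eigenpoly:
  fixes L :: "'a::field poly \<Rightarrow> 'a poly"
  assumes coeff_L: "\<And>p k. coeff (L p) k = m k * coeff p k + B k * coeff p (Suc k)"
    and distinct: "\<And>j. j < n \<Longrightarrow> m j \<noteq> m n"
  shows "\<exists>P. degree P = n \<and> lead_coeff P = 1 \<and> L P = smult (m n) P"
proof -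
  define c where "c k = (if k \<le> n then \<Prod>j\<in>{k..<n}. B j / (m n - m j) else 0)" for k
  define P where "P = (\<Sum>k\<le>n. monom (c k) k)"
  have coeff_P: "coeff P k = c k" for k
    by (simp add: P_def coeff_sum coeff_monom c_def)
  \<comment> \<open>back-substitution: the coefficients are solved for from the top one downwards\<close>
  have c_step: "m n * c k = m k * c k + B k * c (Suc k)" if "k < n" for k
  proof -
    have "c k = B k / (m n - m k) * c (Suc k)"
      using that by (simp add: c_def prod.atLeast_Suc_lessThan)
    then show ?thesis using distinct[OF that] by (simp add: field_simps)
  qed
  have "L P = smult (m n) P"
  proof (rule poly_eqI)
    fix k
    show "coeff (L P) k = coeff (smult (m n) P) k"
      using c_step[of k] by (cases "k < n") (auto simp: coeff_L coeff_P c_def)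
  qed
  moreover have "coeff P n = 1" "\<And>k. n < k \<Longrightarrow> coeff P k = 0"
    by (auto simp: coeff_P c_def)
  then have "degree P = n"
    by (metis degree_le le_degree leI antisym one_neq_zero)
  ultimately show ?thesis using \<open>coeff P n = 1\<close> by auto
qed

lemma qeht_eigenvalue_closed_form:
  fixes q d t1 :: real
  assumes q: "0 < q" "q < 1" and d: "d \<noteq> 0"
  shows "qeht_eigenvalue q d t1 n
           = d * q / (1 - q)\<^sup>2 * (1 - q ^ n) * (q / q ^ n - (1 + (1 - 1 / q) * t1 / d))"
proof (cases n)
  case (Suc k)
  define Q where "Q = q ^ k"
  have Q: "0 < Q" using q by (simp add: Q_def)
  have "qnat q n = (1 - q * Q) / (1 - q)"
    using Suc by (simp add: qnat_def Q_def)
  moreover have "qnat (1 / q) (n - 1) = q * (1 - Q) / (Q * (1 - q))"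
    using Suc q Q by (simp add: qnat_def Q_def power_one_over field_simps)
  moreover have "(1 - q * Q) / (1 - q) * (t1 + d * (q * (1 - Q) / (Q * (1 - q))))
      = d * q / (1 - q)\<^sup>2 * (1 - q * Q) * (q / (q * Q) - (1 + (1 - 1 / q) * t1 / d))"
  proof -
    have key: "(1 - q * Q) / D * (t1 + d * (q * (1 - Q) / (Q * D)))
        = d * q / (D * D) * (1 - q * Q) * (q / (q * Q) - (1 + (1 - 1 / q) * t1 / d))"
      if "D \<noteq> 0" "1 - 1 / q = - D / q" for D
      unfolding that(2) using that(1) q Q d by (simp add: field_simps)
    have "1 - q \<noteq> 0" "1 - 1 / q = - (1 - q) / q" using q by (auto simp: field_simps)
    from key[OF this] show ?thesis by (simp only: power2_eq_square)
  qed
  ultimately show ?thesis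
    using Suc by (simp add: qeht_eigenvalue_def Q_def)
qed (simp add: qeht_eigenvalue_def)

lemma qeht_eigenvalue_inj:
  fixes q d t1 :: real
  assumes q: "0 < q" "q < 1" and d: "d \<noteq> 0" and \<Lambda>: "1 + (1 - 1 / q) * t1 / d < 1"
  shows "inj (qeht_eigenvalue q d t1)"
proof -
  define A where "A = 1 + (1 - 1 / q) * t1 / d"
  define f where "f X = (1 - X) * (q / X - A)" for X
  have f_ne: "f (q ^ j) \<noteq> f (q ^ n)" if "j < n" for j n
  proof -
    define X Y where "X = q ^ j" and "Y = q ^ n"
    have X: "0 < X" "X \<le> 1" using q by (auto simp: X_def power_le_one)
    have Y: "0 < Y" "Y < X" using q that by (auto simp: X_def Y_def power_strict_decreasing)
    have "Y \<le> q" using power_decreasing[of 1 n q] q that by (simp add: Y_def)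
    moreover have "X * Y \<le> Y" using X Y by (simp add: mult_le_cancel_right1)
    ultimately have "X * Y \<le> q" by linarith
    then have "1 \<le> q / (X * Y)" using X Y by simp
    then have "A < q / (X * Y)" using \<Lambda> unfolding A_def by linarith
    then have "(X - Y) * (A - q / (X * Y)) \<noteq> 0" using Y by simp
    moreover have "f X - f Y = (X - Y) * (A - q / (X * Y))"
      using X Y by (simp add: f_def field_simps)
    ultimately have "f X - f Y \<noteq> 0" by simp
    then show ?thesis by (simp add: X_def Y_def)
  qed
  have eigenvalue_f: "qeht_eigenvalue q d t1 n = d * q / (1 - q)\<^sup>2 * f (q ^ n)" for n
    using qeht_eigenvalue_closed_form[OF q d] by (simp add: f_def A_def)
  have "d * q / (1 - q)\<^sup>2 \<noteq> 0" using q d by simp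
  then have "f (q ^ j) = f (q ^ n)" if "qeht_eigenvalue q d t1 j = qeht_eigenvalue q d t1 n" for j n
    using that unfolding eigenvalue_f by simp
  then show ?thesis
    by (intro injI) (metis f_ne linorder_neqE_nat)
qed

lemma qD_first_difference:
  assumes "x \<noteq> 0"
  shows "(1 - q) * x * qD q y x = y x - y (q * x)"
  using assms by (cases "q = 1") (simp_all add: qD_def)

lemma qD_second_difference:
  fixes q x :: real and y :: "real \<Rightarrow> real"
  assumes q: "q \<noteq> 0" "q \<noteq> 1" and x: "x \<noteq> 0"
  shows "(1 - q)\<^sup>2 * x\<^sup>2 * qD (1 / q) (qD q y) x = q * (y (q * x) - y x) + q\<^sup>2 * (y (x / q) - y x)"
proof -
  define D where "D = (1 - q) * x"
  have D: "D \<noteq> 0" using q x by (simp add: D_def)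
  have g1: "D * qD q y x = y x - y (q * x)"
    using x by (simp add: qD_def D_def)
  have g2: "D * qD q y (x / q) = q * (y (x / q) - y x)"
    using x q by (simp add: qD_def D_def field_simps)
  have "qD (1 / q) (qD q y) x = (qD q y x - qD q y (x / q)) / ((1 - 1 / q) * x)"
    using x q by (simp add: qD_def[of "1 / q"])
  also have "(1 - 1 / q) * x = - D / q"
    using q by (simp add: D_def field_simps)
  finally have "D * qD (1 / q) (qD q y) x = q * (qD q y (x / q) - qD q y x)"
    using q D by (simp add: field_simps)
  then have "D * D * qD (1 / q) (qD q y) x = D * (q * (qD q y (x / q) - qD q y x))"
    by (metis mult.assoc)
  also have "\<dots> = q * (D * qD q y (x / q)) - q * (D * qD q y x)"
    by (simp add: algebra_simps)
  also have "\<dots> = q * (y (q * x) - y x) + q\<^sup>2 * (y (x / q) - y x)"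
    unfolding g1 g2 by (simp add: algebra_simps power2_eq_square)
  finally show ?thesis
    by (simp add: D_def power2_eq_square mult_ac)
qed

lemma qeht_three_term:
  fixes q x \<kappa> :: real and \<sigma> \<tau> y :: "real \<Rightarrow> real"
  assumes q: "q \<noteq> 0" "q \<noteq> 1" and x: "x \<noteq> 0"
    and eq: "\<sigma> x * qD (1 / q) (qD q y) x + \<tau> x * qD q y x = \<kappa> * y x"
  shows "(1 - q)\<^sup>2 * x\<^sup>2 * (\<kappa> * y x)
           = (q * \<sigma> x - (1 - q) * x * \<tau> x) * (y (q * x) - y x) + q\<^sup>2 * \<sigma> x * (y (x / q) - y x)"
proof -
  have "(1 - q)\<^sup>2 * x\<^sup>2 * (\<kappa> * y x)
      = \<sigma> x * ((1 - q)\<^sup>2 * x\<^sup>2 * qD (1 / q) (qD q y) x) + (1 - q) * x * \<tau> x * ((1 - q) * x * qD q y x)"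
    unfolding eq[symmetric] by (simp add: algebra_simps power2_eq_square)
  also have "\<dots> = (q * \<sigma> x - (1 - q) * x * \<tau> x) * (y (q * x) - y x) + q\<^sup>2 * \<sigma> x * (y (x / q) - y x)"
    unfolding qD_second_difference[OF q x] qD_first_difference[OF x] by (simp add: algebra_simps)
  finally show ?thesis .
qed

lemma qeht_grid_recurrence:
  fixes q b a s1 s2 t1 t0 \<kappa> :: real and y :: "real \<Rightarrow> real"
  assumes q: "0 < q" "q < 1" and b: "0 < b"
    and sigma2: "\<And>x. q * ((s1 / 2) * x * (x - b) + (1 - 1 / q) * x * (t1 * x + t0)) = (s2 / 2) * x * (x - a)"
    and eq: "\<And>x. (s1 / 2) * x * (x - b) * qD (1 / q) (qD q y) x + (t1 * x + t0) * qD q y x = \<kappa> * y x"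
  shows "(1 - q)\<^sup>2 * \<kappa> * y (q ^ j * b)
           = s2 / 2 * (q ^ j * b - a) / (q ^ j * b) * (y (q ^ Suc j * b) - y (q ^ j * b))
             + q\<^sup>2 * (s1 / 2) * (q ^ j * b - b) / (q ^ j * b) * (y (q ^ (j - 1) * b) - y (q ^ j * b))"
proof -
  define x where "x = q ^ j * b"
  have x: "x \<noteq> 0" using q b by (simp add: x_def)
  have "q * ((s1 / 2) * x * (x - b)) - (1 - q) * x * (t1 * x + t0)
      = q * ((s1 / 2) * x * (x - b) + (1 - 1 / q) * x * (t1 * x + t0))"
    using q by (simp add: field_simps)
  also have "\<dots> = (s2 / 2) * x * (x - a)" by (rule sigma2)
  finally have \<sigma>2: "q * ((s1 / 2) * x * (x - b)) - (1 - q) * x * (t1 * x + t0) = (s2 / 2) * x * (x - a)" .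
  have "(1 - q)\<^sup>2 * x\<^sup>2 * (\<kappa> * y x)
      = (q * ((s1 / 2) * x * (x - b)) - (1 - q) * x * (t1 * x + t0)) * (y (q * x) - y x)
        + q\<^sup>2 * ((s1 / 2) * x * (x - b)) * (y (x / q) - y x)"
    by (rule qeht_three_term[where \<sigma> = "\<lambda>x. (s1 / 2) * x * (x - b)" and \<tau> = "\<lambda>x. t1 * x + t0", OF _ _ x eq])
      (use q in auto)
  also have "\<dots> = s2 / 2 * x * (x - a) * (y (q * x) - y x) + q\<^sup>2 * ((s1 / 2) * x * (x - b) * (y (x / q) - y x))"
    unfolding \<sigma>2 by (simp add: mult.assoc)
  \<comment> \<open>at the endpoint x = b the backward value is multiplied by \<sigma>1(b) = 0\<close>
  also have "(s1 / 2) * x * (x - b) * (y (x / q) - y x) = (s1 / 2) * x * (x - b) * (y (q ^ (j - 1) * b) - y x)"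
    using q by (cases j) (simp_all add: x_def)
  finally have rec: "(1 - q)\<^sup>2 * x\<^sup>2 * (\<kappa> * y x)
      = s2 / 2 * x * (x - a) * (y (q * x) - y x) + q\<^sup>2 * ((s1 / 2) * x * (x - b) * (y (q ^ (j - 1) * b) - y x))" .
  have divide_x2: "(1 - q)\<^sup>2 * x\<^sup>2 * L = c * x * (x - a) * Y1 + q\<^sup>2 * (d * x * (x - b) * Y0)
      \<Longrightarrow> (1 - q)\<^sup>2 * L = c * (x - a) / x * Y1 + q\<^sup>2 * (d * (x - b) / x * Y0)" for L c d Y1 Y0
  proof -
    assume h: "(1 - q)\<^sup>2 * x\<^sup>2 * L = c * x * (x - a) * Y1 + q\<^sup>2 * (d * x * (x - b) * Y0)"
    have "x\<^sup>2 * (c * (x - a) / x * Y1 + q\<^sup>2 * (d * (x - b) / x * Y0))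
        = c * x * (x - a) * Y1 + q\<^sup>2 * (d * x * (x - b) * Y0)"
      using x by (simp add: field_simps power2_eq_square)
    then have "x\<^sup>2 * ((1 - q)\<^sup>2 * L) = x\<^sup>2 * (c * (x - a) / x * Y1 + q\<^sup>2 * (d * (x - b) / x * Y0))"
      using h by (simp add: mult_ac)
    then show ?thesis using x by simp
  qed
  have "(1 - q)\<^sup>2 * (\<kappa> * y x)
      = s2 / 2 * (x - a) / x * (y (q * x) - y x) + q\<^sup>2 * ((s1 / 2) * (x - b) / x * (y (q ^ (j - 1) * b) - y x))"
    by (rule divide_x2) (use rec in \<open>simp add: mult_ac\<close>)
  then show ?thesis by (simp add: x_def mult.assoc)
qed

definition qpoch_weight :: "real \<Rightarrow> real \<Rightarrow> real \<Rightarrow> real \<Rightarrow> real" where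
  "qpoch_weight q b a x = qpoch_inf (q * x / b) q / qpoch_inf (x / a) q"

lemma qpoch_weight_pos:
  fixes q b a x :: real
  assumes q: "0 < q" "q < 1" and ab: "0 < b" "b < a" and x: "x \<le> b"
  shows "0 < qpoch_weight q b a x"
proof -
  have "q * x \<le> q * b" using q x by simp
  also have "q * b < b" using q ab by (simp add: mult_less_cancel_right2)
  finally have "q * x < b" .
  then have "q * x / b < 1" using ab by simp
  moreover have "x / a < 1" using ab x by (simp add: divide_less_eq)
  ultimately show ?thesis
    using qpoch_inf_pos[OF q] by (simp add: qpoch_weight_def)
qed

lemma qpoch_weight_le:
  fixes q b a x :: real
  assumes q: "0 < q" "q < 1" and ab: "0 < b" "b < a" and x: "0 \<le> x" "x \<le> b"
  shows "qpoch_weight q b a x \<le> 1 / qpoch_inf (b / a) q"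
proof -
  have "q * x \<le> q * b" using q x by simp
  also have "q * b < b" using q ab by (simp add: mult_less_cancel_right2)
  finally have "q * x < b" .
  then have qx: "0 \<le> q * x / b" "q * x / b < 1" using q ab x by simp_all
  have "qpoch_inf (q * x / b) q \<le> 1"
    using qpoch_inf_le_1[OF q qx] .
  moreover have "0 < qpoch_inf (b / a) q"
    using ab by (intro qpoch_inf_pos[OF q]) simp
  moreover have "qpoch_inf (b / a) q \<le> qpoch_inf (x / a) q"
    using ab x by (intro qpoch_inf_antimono[OF q]) (simp_all add: divide_right_mono)
  ultimately show ?thesis
    unfolding qpoch_weight_def by (rule frac_le[OF zero_le_one])
qed

lemma qpoch_weight_shift:
  fixes q b a x :: real
  assumes q: "0 < q" "q < 1" and ab: "0 < b" "b < a" and x: "x \<le> b"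
  shows "(1 - q * x / b) * qpoch_weight q b a (q * x) = (1 - x / a) * qpoch_weight q b a x"
proof -
  have "q * x \<le> q * b" using q x by simp
  also have "q * b < b" using q ab by (simp add: mult_less_cancel_right2)
  finally have "q * x < b" .
  then have "q * x / b \<noteq> 1" "x / a \<noteq> 1" using ab x by auto
  then have A: "qpoch_inf (q * x / b) q = (1 - q * x / b) * qpoch_inf (q * (q * x) / b) q"
    and B: "qpoch_inf (x / a) q = (1 - x / a) * qpoch_inf (q * x / a) q"
    using qpoch_inf_shift[OF q] by (simp_all add: mult_ac)
  have "1 - x / a \<noteq> 0" using \<open>x / a \<noteq> 1\<close> by simp
  moreover have "c * (y / z) = d * (c * y / (d * z))" if "d \<noteq> 0" for c d y z :: real
    using that by simp
  ultimately show ?thesis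
    unfolding qpoch_weight_def A B by blast
qed

text \<open>The Pearson equation of the weight: it turns the grid recurrence into a self-adjoint one.\<close>
lemma qpoch_weight_balance:
  fixes q b a s1 s2 C x :: real
  assumes q: "0 < q" "q < 1" and ab: "0 < b" "b < a" and x: "x \<le> b" "x \<noteq> 0"
    and C: "C * (q\<^sup>2 * s1 * b) = s2 * a"
  shows "q * C * qpoch_weight q b a (q * x) * (q\<^sup>2 * (s1 / 2) * (q * x - b) / (q * x))
           = qpoch_weight q b a x * (s2 / 2 * (x - a) / x)"
proof -
  have "q * C * qpoch_weight q b a (q * x) * (q\<^sup>2 * (s1 / 2) * (q * x - b) / (q * x))
      = - (C * (q\<^sup>2 * s1 * b)) / (2 * x) * ((1 - q * x / b) * qpoch_weight q b a (q * x))"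
    using q ab x by (simp add: field_simps)
  also have "\<dots> = - (s2 * a) / (2 * x) * ((1 - x / a) * qpoch_weight q b a x)"
    unfolding C qpoch_weight_shift[OF q ab x(1)] ..
  also have "\<dots> = qpoch_weight q b a x * (s2 / 2 * (x - a) / x)"
    using ab x by (simp add: field_simps)
  finally show ?thesis .
qed

lemma discrete_green_identity:
  fixes u \<alpha> \<gamma> F G :: "nat \<Rightarrow> 'a::comm_ring" and \<mu> \<nu> :: 'a
  assumes balance: "\<And>j. u (Suc j) * \<gamma> (Suc j) = u j * \<alpha> j" and \<gamma>0: "\<gamma> 0 = 0"
    and F: "\<And>j. \<mu> * F j = \<alpha> j * (F (Suc j) - F j) + \<gamma> j * (F (j - 1) - F j)"
    and G: "\<And>j. \<nu> * G j = \<alpha> j * (G (Suc j) - G j) + \<gamma> j * (G (j - 1) - G j)"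
  shows "(\<mu> - \<nu>) * (\<Sum>j<Suc N. u j * F j * G j) = u N * \<alpha> N * (G N * F (Suc N) - F N * G (Suc N))"
proof (induction N)
  case 0
  have "(\<mu> - \<nu>) * (u 0 * F 0 * G 0) = u 0 * (G 0 * (\<mu> * F 0) - F 0 * (\<nu> * G 0))"
    by (simp add: algebra_simps)
  also have "\<dots> = u 0 * \<alpha> 0 * (G 0 * F 1 - F 0 * G 1)"
    unfolding F G \<gamma>0 by (simp add: algebra_simps)
  finally show ?case by simp
next
  case (Suc N)
  let ?n = "Suc N"
  let ?E = "\<lambda>N. u N * \<alpha> N * (G N * F (Suc N) - F N * G (Suc N))"
  have "(\<mu> - \<nu>) * (u ?n * F ?n * G ?n) = u ?n * (G ?n * (\<mu> * F ?n) - F ?n * (\<nu> * G ?n))"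
    by (simp add: algebra_simps)
  also have "\<dots> = u ?n * \<alpha> ?n * (G ?n * F (Suc ?n) - F ?n * G (Suc ?n))
        + u ?n * \<gamma> ?n * (G ?n * F N - F ?n * G N)"
    unfolding F G by (simp add: algebra_simps)
  also have "\<dots> = ?E ?n - ?E N"
    unfolding balance by (simp add: algebra_simps)
  finally have step: "(\<mu> - \<nu>) * (u ?n * F ?n * G ?n) = ?E ?n - ?E N" .
  have "(\<mu> - \<nu>) * (\<Sum>j<Suc ?n. u j * F j * G j)
      = (\<mu> - \<nu>) * (\<Sum>j<?n. u j * F j * G j) + (\<mu> - \<nu>) * (u ?n * F ?n * G ?n)"
    by (simp add: distrib_left)
  also have "\<dots> = ?E ?n"
    unfolding Suc.IH step by simp
  finally show ?case .
qed

lemma poly_scaled_wronskian: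
  fixes P Q :: "'a::comm_ring_1 poly"
  shows "\<exists>V. \<forall>x. poly Q x * poly P (c * x) - poly P x * poly Q (c * x) = x * poly V x"
proof -
  define W where "W = Q * pcompose P [:0, c:] - P * pcompose Q [:0, c:]"
  have "poly W 0 = 0" by (simp add: W_def poly_pcompose)
  then obtain V where "W = [:0, 1:] * V"
    using dvd_iff_poly_eq_0[of 0 W] by (auto elim: dvdE)
  then have "poly W x = x * poly V x" for x
    by simp
  then have "poly Q x * poly P (x * c) - poly P x * poly Q (x * c) = x * poly V x" for x
    by (simp add: W_def poly_pcompose)
  then show ?thesis by (metis mult.commute)
qed

lemma summable_geometric_grid:
  fixes c q b M :: real and f :: "real \<Rightarrow> real"
  assumes c: "\<bar>c\<bar> < 1" and q: "0 \<le> q" "q \<le> 1" and b: "0 \<le> b"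
    and bound: "\<And>x. 0 \<le> x \<Longrightarrow> x \<le> b \<Longrightarrow> \<bar>f x\<bar> \<le> M"
  shows "summable (\<lambda>j. c ^ j * f (q ^ j * b))"
proof (rule summable_comparison_test)
  show "summable (\<lambda>j. M * \<bar>c\<bar> ^ j)"
    using c by (intro summable_mult summable_geometric) simp
  have "\<bar>f (q ^ j * b)\<bar> \<le> M" for j
    using q b by (intro bound mult_left_le_one_le) (simp_all add: power_le_one)
  then have "norm (c ^ j * f (q ^ j * b)) \<le> \<bar>c\<bar> ^ j * M" for j
    by (simp add: abs_mult power_abs mult_left_mono)
  then show "\<exists>N. \<forall>j\<ge>N. norm (c ^ j * f (q ^ j * b)) \<le> M * \<bar>c\<bar> ^ j"
    by (simp add: mult.commute)
qed

lemma summable_qpoch_weight_poly: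
  fixes q b a c :: real and p :: "real poly"
  assumes q: "0 < q" "q < 1" and ab: "0 < b" "b < a" and c: "\<bar>c\<bar> < 1"
  shows "summable (\<lambda>j. c ^ j * (qpoch_weight q b a (q ^ j * b) * poly p (q ^ j * b)))"
proof -
  have "bounded (poly p ` {0..b})"
    by (rule compact_imp_bounded, rule compact_continuous_image) (auto intro: continuous_intros)
  then obtain M where M: "\<forall>x\<in>{0..b}. \<bar>poly p x\<bar> \<le> M"
    unfolding bounded_real by blast
  define W where "W = 1 / qpoch_inf (b / a) q"
  have bound: "\<bar>qpoch_weight q b a x * poly p x\<bar> \<le> W * M" if "0 \<le> x" "x \<le> b" for x
  proof -
    have "0 < qpoch_weight q b a x" "qpoch_weight q b a x \<le> W"
      using qpoch_weight_pos[OF q ab] qpoch_weight_le[OF q ab] that by (auto simp: W_def)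
    then show ?thesis
      using M that by (simp add: abs_mult mult_mono)
  qed
  show ?thesis
    by (rule summable_geometric_grid[OF c _ _ _ bound]) (use q ab in auto)
qed

lemma qeht_grid_orthogonal:
  fixes q b a s1 s2 t1 t0 C \<mu> \<nu> :: real and P Q :: "real poly"
  assumes q: "0 < q" "q < 1" and ab: "0 < b" "b < a"
    and sigma2: "\<And>x. q * ((s1 / 2) * x * (x - b) + (1 - 1 / q) * x * (t1 * x + t0)) = (s2 / 2) * x * (x - a)"
    and C: "C * (q\<^sup>2 * s1 * b) = s2 * a" and qC: "0 < q * C" "q * C < 1"
    and eqP: "\<And>x. (s1 / 2) * x * (x - b) * qD (1 / q) (qD q (poly P)) x + (t1 * x + t0) * qD q (poly P) x
                  = \<mu> * poly P x"
    and eqQ: "\<And>x. (s1 / 2) * x * (x - b) * qD (1 / q) (qD q (poly Q)) x + (t1 * x + t0) * qD q (poly Q) x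
                  = \<nu> * poly Q x"
    and \<mu>\<nu>: "\<mu> \<noteq> \<nu>"
  shows "(\<lambda>j. (q * C) ^ j * (qpoch_weight q b a (q ^ j * b) * poly (P * Q) (q ^ j * b))) sums 0"
proof -
  define x where "x j = q ^ j * b" for j
  define u where "u j = (q * C) ^ j * qpoch_weight q b a (x j)" for j
  define \<alpha> where "\<alpha> j = s2 / 2 * (x j - a) / x j" for j
  define \<gamma> where "\<gamma> j = q\<^sup>2 * (s1 / 2) * (x j - b) / x j" for j
  define F G where "F j = poly P (x j)" and "G j = poly Q (x j)" for j
  have x: "0 < x j" "x j \<le> b" "x (Suc j) = q * x j" for j
    using q ab by (auto simp: x_def mult_left_le_one_le power_le_one)
  have recF: "(1 - q)\<^sup>2 * \<mu> * F j = \<alpha> j * (F (Suc j) - F j) + \<gamma> j * (F (j - 1) - F j)" for j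
    using qeht_grid_recurrence[OF q ab(1) sigma2 eqP] by (simp add: F_def \<alpha>_def \<gamma>_def x_def)
  have recG: "(1 - q)\<^sup>2 * \<nu> * G j = \<alpha> j * (G (Suc j) - G j) + \<gamma> j * (G (j - 1) - G j)" for j
    using qeht_grid_recurrence[OF q ab(1) sigma2 eqQ] by (simp add: G_def \<alpha>_def \<gamma>_def x_def)
  have balance: "u (Suc j) * \<gamma> (Suc j) = u j * \<alpha> j" for j
  proof -
    have "x j \<noteq> 0" using x(1)[of j] by simp
    have "u (Suc j) * \<gamma> (Suc j)
        = (q * C) ^ j * (q * C * qpoch_weight q b a (q * x j) * (q\<^sup>2 * (s1 / 2) * (q * x j - b) / (q * x j)))"
      by (simp add: u_def \<gamma>_def x(3) mult_ac)
    also have "\<dots> = (q * C) ^ j * (qpoch_weight q b a (x j) * (s2 / 2 * (x j - a) / x j))"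
      by (simp only: qpoch_weight_balance[OF q ab x(2) \<open>x j \<noteq> 0\<close> C])
    finally show ?thesis by (simp add: u_def \<alpha>_def mult_ac)
  qed
  have "\<gamma> 0 = 0" by (simp add: \<gamma>_def x_def)
  note green = discrete_green_identity[OF balance this recF recG]
  obtain V where V: "\<And>y. poly Q y * poly P (q * y) - poly P y * poly Q (q * y) = y * poly V y"
    using poly_scaled_wronskian by blast
  define R where "R = smult (s2 / 2) ([:- a, 1:] * V)"
  have boundary: "u N * \<alpha> N * (G N * F (Suc N) - F N * G (Suc N))
      = (q * C) ^ N * (qpoch_weight q b a (x N) * poly R (x N))" for N
  proof -
    have "G N * F (Suc N) - F N * G (Suc N) = x N * poly V (x N)"
      using V by (simp add: F_def G_def x(3))
    then show ?thesis
      using x(1)[of N] by (simp add: u_def \<alpha>_def R_def field_simps)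
  qed
  \<comment> \<open>the boundary term of the Green identity is itself the term of a convergent series\<close>
  have "(\<lambda>N. (q * C) ^ N * (qpoch_weight q b a (x N) * poly R (x N))) \<longlonglongrightarrow> 0"
    using summable_qpoch_weight_poly[OF q ab, of "q * C" R] qC by (intro summable_LIMSEQ_zero) (simp add: x_def)
  then have "(\<lambda>N. ((1 - q)\<^sup>2 * \<mu> - (1 - q)\<^sup>2 * \<nu>) * (\<Sum>j<Suc N. u j * F j * G j)) \<longlonglongrightarrow> 0"
    unfolding green boundary .
  moreover have "(\<lambda>j. u j * F j * G j) sums (\<Sum>j. u j * F j * G j)"
    using summable_qpoch_weight_poly[OF q ab, of "q * C" "P * Q"] qC
    by (intro summable_sums) (simp add: u_def F_def G_def x_def mult_ac)
  then have "(\<lambda>N. \<Sum>j<Suc N. u j * F j * G j) \<longlonglongrightarrow> (\<Sum>j. u j * F j * G j)"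
    unfolding sums_def by (rule LIMSEQ_Suc)
  ultimately have "((1 - q)\<^sup>2 * \<mu> - (1 - q)\<^sup>2 * \<nu>) * (\<Sum>j. u j * F j * G j) = 0"
    using LIMSEQ_unique tendsto_mult_left by blast
  then have "(\<Sum>j. u j * F j * G j) = 0"
    using q \<mu>\<nu> by (simp add: right_diff_distrib[symmetric])
  with \<open>(\<lambda>j. u j * F j * G j) sums _\<close> show ?thesis
    by (simp add: u_def F_def G_def x_def mult_ac)
qed

lemma qpoch_weight_grid_norm_pos:
  fixes q b a c :: real and P :: "real poly"
  assumes q: "0 < q" "q < 1" and ab: "0 < b" "b < a" and c: "0 < c" "c < 1" and P: "P \<noteq> 0"
  shows "0 < (\<Sum>j. c ^ j * (qpoch_weight q b a (q ^ j * b) * poly (P * P) (q ^ j * b)))"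
proof -
  have "inj (\<lambda>j. q ^ j * b)"
  proof (rule injI)
    fix i j :: nat
    assume "q ^ i * b = q ^ j * b"
    then have "q ^ i = q ^ j" using ab by simp
    then show "i = j"
      using q power_strict_decreasing[of _ _ q] by (metis linorder_neqE_nat less_irrefl)
  qed
  then have "infinite (range (\<lambda>j. q ^ j * b))"
    using finite_imageD by blast
  then obtain i where i: "poly P (q ^ i * b) \<noteq> 0"
    using poly_roots_finite[OF P] finite_subset[of "range (\<lambda>j. q ^ j * b)" "{x. poly P x = 0}"] by blast
  have pos: "0 < c ^ j * qpoch_weight q b a (q ^ j * b)" for j
    using c qpoch_weight_pos[OF q ab] q ab by (simp add: mult_left_le_one_le power_le_one)
  show ?thesis
  proof (rule suminf_pos2)
    show "summable (\<lambda>j. c ^ j * (qpoch_weight q b a (q ^ j * b) * poly (P * P) (q ^ j * b)))"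
      by (rule summable_qpoch_weight_poly[OF q ab]) (use c in simp)
    show "0 \<le> c ^ j * (qpoch_weight q b a (q ^ j * b) * poly (P * P) (q ^ j * b))" for j
      using mult_nonneg_nonneg[OF less_imp_le[OF pos[of j]], of "poly (P * P) (q ^ j * b)"]
      by (simp add: mult.assoc)
    show "0 < c ^ i * (qpoch_weight q b a (q ^ i * b) * poly (P * P) (q ^ i * b))"
      using mult_pos_pos[OF pos[of i], of "poly (P * P) (q ^ i * b)"]
        order_le_neq_trans[OF zero_le_square, of "poly P (q ^ i * b)"] i
      by (simp add: mult.assoc)
  qed
qed

lemma qint_has_grid_series:
  fixes q b C S :: real and \<alpha> :: complex and g w :: "real \<Rightarrow> real"
  assumes q: "0 < q" and b: "0 < b" and \<alpha>: "exp (\<alpha> * of_real (ln q)) = of_real C"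
    and S: "(\<lambda>j. (q * C) ^ j * (w (q ^ j * b) * g (q ^ j * b))) sums S"
  shows "qint_has q b (\<lambda>x. of_real (g x) * (exp (\<alpha> * of_real (ln \<bar>x\<bar>)) * of_real (w x)))
           (of_real ((1 - q) * b) * exp (\<alpha> * of_real (ln b)) * of_real S)"
proof -
  define K where "K = complex_of_real ((1 - q) * b) * exp (\<alpha> * of_real (ln b))"
  have "exp (\<alpha> * of_real (ln \<bar>q ^ j * b\<bar>)) = of_real C ^ j * exp (\<alpha> * of_real (ln b))" for j
  proof -
    have "\<alpha> * of_real (ln \<bar>q ^ j * b\<bar>) = of_nat j * (\<alpha> * of_real (ln q)) + \<alpha> * of_real (ln b)"
      using q b by (simp add: ln_mult ln_realpow algebra_simps)
    then show ?thesis by (simp add: exp_add exp_of_nat_mult \<alpha>)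
  qed
  then have "complex_of_real ((1 - q) * b * q ^ j)
        * (of_real (g (q ^ j * b)) * (exp (\<alpha> * of_real (ln \<bar>q ^ j * b\<bar>)) * of_real (w (q ^ j * b))))
      = K * of_real ((q * C) ^ j * (w (q ^ j * b) * g (q ^ j * b)))" for j
    by (simp add: K_def power_mult_distrib mult_ac)
  moreover have "(\<lambda>j. K * of_real ((q * C) ^ j * (w (q ^ j * b) * g (q ^ j * b)))) sums (K * of_real S)"
    by (rule sums_mult[OF sums_of_real[OF S]])
  ultimately show ?thesis
    unfolding qint_has_def K_def[symmetric] by (simp only:)
qed

lemma qeht_polynomial_eigenfunctions:
  fixes q b s1 t1 t0 :: real
  assumes q: "0 < q" "q < 1" and s1: "s1 \<noteq> 0" and \<Lambda>: "1 + (1 - 1 / q) * t1 / (s1 / 2) < 1"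
  shows "\<exists>P. \<forall>n. degree (P n) = n \<and> P n \<noteq> 0 \<and>
           (\<forall>x. (s1 / 2) * x * (x - b) * qD (1 / q) (qD q (poly (P n))) x + (t1 * x + t0) * qD q (poly (P n)) x
                = qeht_eigenvalue q (s1 / 2) t1 n * poly (P n) x)"
proof -
  let ?L = "qeht_op q [:0, - (s1 / 2) * b, s1 / 2:] [:t0, t1:]"
  have "inj (qeht_eigenvalue q (s1 / 2) t1)"
    by (rule qeht_eigenvalue_inj) (use q s1 \<Lambda> in auto)
  then have "\<exists>P. degree P = n \<and> lead_coeff P = 1 \<and> ?L P = smult (qeht_eigenvalue q (s1 / 2) t1 n) P" for n
    by (intro bidiagonal_eigenpoly[OF coeff_qeht_op]) (auto dest: injD)
  then obtain P where P: "\<And>n. degree (P n) = n \<and> lead_coeff (P n) = 1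
                                \<and> ?L (P n) = smult (qeht_eigenvalue q (s1 / 2) t1 n) (P n)"
    by metis
  have "(s1 / 2) * x * (x - b) * qD (1 / q) (qD q (poly (P n))) x + (t1 * x + t0) * qD q (poly (P n)) x
      = qeht_eigenvalue q (s1 / 2) t1 n * poly (P n) x" for n x
  proof -
    have "poly (?L (P n)) x = qeht_eigenvalue q (s1 / 2) t1 n * poly (P n) x"
      using P by simp
    moreover have "q \<noteq> 1" using q by simp
    ultimately show ?thesis
      by (simp add: poly_qeht_op algebra_simps diff_divide_distrib)
  qed
  moreover have "P n \<noteq> 0" for n
    using P[of n] by auto
  ultimately show ?thesis
    using P by blast
qed

lemma qeht_grid_orthogonal_family:
  fixes q b a s1 s2 t1 t0 C :: real
  assumes q: "0 < q" "q < 1" and ab: "0 < b" "b < a" and s1: "s1 \<noteq> 0"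
    and \<Lambda>: "1 + (1 - 1 / q) * t1 / (s1 / 2) < 1"
    and sigma2: "\<And>x. q * ((s1 / 2) * x * (x - b) + (1 - 1 / q) * x * (t1 * x + t0)) = (s2 / 2) * x * (x - a)"
    and C: "C * (q\<^sup>2 * s1 * b) = s2 * a" and qC: "0 < q * C" "q * C < 1"
  shows "\<exists>P N. (\<forall>n. degree (P n) = n)
           \<and> (\<forall>n x. (s1 / 2) * x * (x - b) * qD (1 / q) (qD q (poly (P n))) x + (t1 * x + t0) * qD q (poly (P n)) x
                    = qeht_eigenvalue q (s1 / 2) t1 n * poly (P n) x)
           \<and> (\<forall>n. 0 < N n)
           \<and> (\<forall>m n. (\<lambda>j. (q * C) ^ j * (qpoch_weight q b a (q ^ j * b) * poly (P n * P m) (q ^ j * b)))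
                      sums (if m = n then N n else 0))"
proof -
  obtain P where P: "\<And>n. degree (P n) = n" "\<And>n. P n \<noteq> 0"
    and eq: "\<And>n x. (s1 / 2) * x * (x - b) * qD (1 / q) (qD q (poly (P n))) x + (t1 * x + t0) * qD q (poly (P n)) x
                    = qeht_eigenvalue q (s1 / 2) t1 n * poly (P n) x"
    using qeht_polynomial_eigenfunctions[OF q s1 \<Lambda>, of b t0] by blast
  define N where "N n = (\<Sum>j. (q * C) ^ j * (qpoch_weight q b a (q ^ j * b) * poly (P n * P n) (q ^ j * b)))"
    for n
  have "0 < N n" for n
    unfolding N_def by (rule qpoch_weight_grid_norm_pos[OF q ab qC P(2)])
  moreover have "(\<lambda>j. (q * C) ^ j * (qpoch_weight q b a (q ^ j * b) * poly (P n * P m) (q ^ j * b)))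
          sums (if m = n then N n else 0)" for m n
  proof (cases "m = n")
    case True
    show ?thesis
      using summable_sums[OF summable_qpoch_weight_poly[OF q ab, of "q * C" "P n * P n"]] qC True
      by (simp add: N_def)
  next
    case False
    have "qeht_eigenvalue q (s1 / 2) t1 n \<noteq> qeht_eigenvalue q (s1 / 2) t1 m"
      using qeht_eigenvalue_inj[OF q _ \<Lambda>] s1 False by (auto dest: injD)
    then show ?thesis
      using qeht_grid_orthogonal[OF q ab sigma2 C qC eq eq] False by simp
  qed
  ultimately show ?thesis
    using P(1) eq by blast
qed

lemma sigma2_pearson_ratio:
  fixes q s1 a1 t1 t0 s2 a2 :: real
  assumes q: "0 < q" and s1: "s1 \<noteq> 0" and a1: "a1 \<noteq> 0"
    and sigma2: "\<And>x. q * ((s1 / 2) * x * (x - a1) + (1 - 1 / q) * x * (t1 * x + t0)) = (s2 / 2) * x * (x - a2)"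
  shows "q * ((1 / q ^ 2) * s2 * a2 / (s1 * a1)) = q * ((1 / q) * (1 - (1 - 1 / q) / a1 * (t0 / (s1 / 2))))"
proof -
  \<comment> \<open>compare the coefficients of x in sigma2 by evaluating at x = 1 and x = -1\<close>
  have "q * (s2 * a2) = q * (q * (s1 * a1) - 2 * (q - 1) * t0)"
    using sigma2[of 1] sigma2[of "-1"] q by (simp add: field_simps)
  then have s2a2: "s2 * a2 = q * (s1 * a1) - 2 * (q - 1) * t0"
    using q by simp
  show ?thesis
    unfolding mult.assoc[of _ s2] s2a2 using q s1 a1 by (simp add: field_simps power2_eq_square)
qed

theorem theorem4p10:
  fixes q s1 a1 t1 t0 s2 a2 :: real
  assumes q: "0 < q" "q < 1"
    and t1: "t1 \<noteq> 0"
    and s1: "s1 \<noteq> 0" and s2: "s2 \<noteq> 0"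
    and a: "0 < a1" "a1 < a2"
    and sigma2: "\<forall>x::real. q * ((s1 / 2) * x * (x - a1) + (1 - 1 / q) * x * (t1 * x + t0))
                      = (s2 / 2) * x * (x - a2)"
    and y0: "0 < q * ((1 / q) * (1 - (1 - 1 / q) / a1 * (t0 / (s1 / 2))))"
            "q * ((1 / q) * (1 - (1 - 1 / q) / a1 * (t0 / (s1 / 2)))) < 1"
    and Lam: "0 < q ^ 2 * ((1 / q ^ 2) * (1 + (1 - 1 / q) * t1 / (s1 / 2)))"
             "q ^ 2 * ((1 / q ^ 2) * (1 + (1 - 1 / q) * t1 / (s1 / 2))) < 1"
  shows "\<forall>\<alpha>::complex.
           exp (\<alpha> * complex_of_real (ln q)) = complex_of_real ((1 / q ^ 2) * s2 * a2 / (s1 * a1)) \<longrightarrow>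
           (\<exists>(P :: nat \<Rightarrow> real poly) (dsq :: nat \<Rightarrow> complex).
              (\<forall>n. degree (P n) = n) \<and>
              (\<forall>n. \<forall>x::real.
                  (s1 / 2) * x * (x - a1) * qD (1 / q) (qD q (poly (P n))) x
                  + (t1 * x + t0) * qD q (poly (P n)) x
                  + (- qnum q (int n) * (t1 + 1 / 2 * qnum (1 / q) (int n - 1) * s1)) * poly (P n) x = 0) \<and>
              (\<forall>n. dsq n \<noteq> 0) \<and>
              (\<forall>m n. qint_has q a1
                  (\<lambda>x. complex_of_real (poly (P n) x * poly (P m) x)
                       * (exp (\<alpha> * complex_of_real (ln \<bar>x\<bar>))
                          * complex_of_real (qpoch_inf (q * x / a1) q / qpoch_inf (x / a2) q)))
                  (if m = n then dsq n else 0)))"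
proof (intro allI impI, goal_cases)
  case (1 \<alpha>)
  define C where "C = (1 / q ^ 2) * s2 * a2 / (s1 * a1)"
  have \<alpha>: "exp (\<alpha> * complex_of_real (ln q)) = complex_of_real C"
    using 1 by (simp add: C_def)
  have C: "C * (q\<^sup>2 * s1 * a1) = s2 * a2"
    using q s1 a by (simp add: C_def field_simps)
  have qC: "0 < q * C" "q * C < 1"
    using y0 sigma2_pearson_ratio[OF q(1) s1 _ sigma2[rule_format]] a by (simp_all add: C_def)
  obtain P N where P: "\<And>n. degree (P n) = n"
    and eq: "\<And>n x. (s1 / 2) * x * (x - a1) * qD (1 / q) (qD q (poly (P n))) x + (t1 * x + t0) * qD q (poly (P n)) x
                    = qeht_eigenvalue q (s1 / 2) t1 n * poly (P n) x"
    and N: "\<And>n. 0 < N n"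
    and series: "\<And>m n. (\<lambda>j. (q * C) ^ j * (qpoch_weight q a1 a2 (q ^ j * a1) * poly (P n * P m) (q ^ j * a1)))
                          sums (if m = n then N n else 0)"
    using qeht_grid_orthogonal_family[OF q a s1 _ sigma2[rule_format] C qC] Lam(2) q by auto
  define K where "K = complex_of_real ((1 - q) * a1) * exp (\<alpha> * of_real (ln a1))"
  have qint: "qint_has q a1
      (\<lambda>x. complex_of_real (poly (P n) x * poly (P m) x)
           * (exp (\<alpha> * complex_of_real (ln \<bar>x\<bar>)) * complex_of_real (qpoch_weight q a1 a2 x)))
      (K * of_real (if m = n then N n else 0))" for m n
    unfolding K_def
    by (intro qint_has_grid_series[OF q(1) a(1) \<alpha>]) (use series[where m = m and n = n] in \<open>simp add: mult_ac\<close>)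
  have "K \<noteq> 0" using q a by (simp add: K_def)
  show ?case
    apply (intro exI[of _ P] exI[of _ "\<lambda>n. K * of_real (N n)"] conjI allI)
    subgoal for n by (rule P)
    subgoal for n x
      unfolding mult_minus_left qnum_eq_qeht_eigenvalue using eq[where n = n and x = x] by simp
    subgoal for n using \<open>K \<noteq> 0\<close> N[of n] by simp
    subgoal for m n
      using qint[where m = m and n = n] unfolding qpoch_weight_def by (cases "m = n") simp_all
    done
qed

end
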